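(* Let $\sigma$ be the sign function on $\mathbb{R}$ (with $\sigma(0)=0$). For $\varepsilon>0$ and $\Phi\in\mathscr{C}_c^\infty(\mathbb{R}^2)$ define $$Kir_\varepsilon\Phi(x)=\big(\varepsilon\sigma(x)\mathcal{X}_{\{|x|\le\varepsilon\}}(x)+x\mathcal{X}_{\{|x|>\varepsilon\}}(x)\big)\int_{\{y:|x-y|>\varepsilon\}}\Phi(x,y)\frac{dy}{x-y},$$ which is the Kirchhoff divergence of $\Phi$ with respect to the distribution $T_\varepsilon$ induced by the function $h^\varepsilon(x)=\frac1x\mathcal{X}_{\{|x|>\varepsilon\}}(x)+\frac{\sigma(x)}{\varepsilon}\mathcal{X}_{[-\varepsilon,\varepsilon]}(x)$ and $\langle\!\langle S_\varepsilon,\Theta\rangle\!\rangle=\iint_{\{|x-y|>\varepsilon\}}\frac{\Theta(x,y)}{x-y}\,dx\,dy$. Then: (i) $Kir_\varepsilon\Phi(x)\to xH_y\Phi(x,x)$ as $\varepsilon\to0$, for every $x\in\mathbb{R}$; (ii) for $T=\mathrm{p.v.}\frac1x$ and $\langle\!\langle S,\Theta\rangle\!\rangle=\int_{\mathbb{R}}H_y\Theta(x,x)\,dx$, $\Theta\in\mathscr{C}_c^\infty(\mathbb{R}^2)$, the function $\psi(x)=xH_y\Phi(x,x)$ is the Kirchhoff divergence: $\langle T,\varphi\psi\rangle=\langle\!\langle S,\varphi\Phi\rangle\!\rangle$ for every $\varphi\in\mathscr{C}_c^\infty(\mathbb{R})$.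
   Context: $\langle\mathrm{p.v.}\frac1x,\varphi\rangle=\lim_{\varepsilon\to0}\int_{|x|>\varepsilon}\frac{\varphi(x)}{x}dx$. For a function $\Theta(x,y)$, $H_y\Theta(x,z)=\lim_{\varepsilon\to0}\int_{|z-y|>\varepsilon}\frac{\Theta(x,y)}{z-y}dy$ is the Hilbert transform of $y\mapsto\Theta(x,y)$ evaluated at $z$. $(\varphi\Phi)(x,y)=\varphi(x)\Phi(x,y)$. *)

theory Defs
  imports "HOL-Analysis.Analysis"
begin

fun Ck :: "nat \<Rightarrow> ('a::euclidean_space \<Rightarrow> real) \<Rightarrow> bool" where
  "Ck 0 f = continuous_on UNIV f"
| "Ck (Suc k) f = (continuous_on UNIV f \<and> (\<exists>f'. (\<forall>x. (f has_derivative f' x) (at x)) \<and>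
      (\<forall>v. Ck k (\<lambda>x. f' x v))))"

definition smooth :: "('a::euclidean_space \<Rightarrow> real) \<Rightarrow> bool" where
  "smooth f \<longleftrightarrow> (\<forall>k. Ck k f)"

definition compact_support :: "('a::euclidean_space \<Rightarrow> real) \<Rightarrow> bool" where
  "compact_support f \<longleftrightarrow> compact (closure {x. f x \<noteq> 0})"

definition test_fun :: "('a::euclidean_space \<Rightarrow> real) \<Rightarrow> bool" where
  "test_fun f \<longleftrightarrow> smooth f \<and> compact_support f"

definition pv_recip :: "(real \<Rightarrow> real) \<Rightarrow> real" where
  "pv_recip \<phi> = Lim (at_right 0) (\<lambda>\<epsilon>. integral {x. \<epsilon> < \<bar>x\<bar>} (\<lambda>x. \<phi> x / x))"

definition hilbert_y :: "(real \<times> real \<Rightarrow> real) \<Rightarrow> real \<Rightarrow> real \<Rightarrow> real" where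
  "hilbert_y \<Theta> x z = Lim (at_right 0) (\<lambda>\<epsilon>. integral {y. \<epsilon> < \<bar>z - y\<bar>} (\<lambda>y. \<Theta> (x, y) / (z - y)))"

definition S_pair :: "(real \<times> real \<Rightarrow> real) \<Rightarrow> real" where
  "S_pair \<Theta> = integral UNIV (\<lambda>x. hilbert_y \<Theta> x x)"

definition h_eps :: "real \<Rightarrow> real \<Rightarrow> real" where
  "h_eps \<epsilon> x = (1 / x) * indicator {x. \<bar>x\<bar> > \<epsilon>} x + (sgn x / \<epsilon>) * indicator {-\<epsilon>..\<epsilon>} x"

definition T_eps :: "real \<Rightarrow> (real \<Rightarrow> real) \<Rightarrow> real" where
  "T_eps \<epsilon> \<phi> = integral UNIV (\<lambda>x. h_eps \<epsilon> x * \<phi> x)"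

definition S_eps :: "real \<Rightarrow> (real \<times> real \<Rightarrow> real) \<Rightarrow> real" where
  "S_eps \<epsilon> \<Theta> = integral {p. \<epsilon> < \<bar>fst p - snd p\<bar>} (\<lambda>p. \<Theta> p / (fst p - snd p))"

definition Kir_eps :: "real \<Rightarrow> (real \<times> real \<Rightarrow> real) \<Rightarrow> real \<Rightarrow> real" where
  "Kir_eps \<epsilon> \<Phi> x =
     (\<epsilon> * sgn x * indicator {x. \<bar>x\<bar> \<le> \<epsilon>} x + x * indicator {x. \<bar>x\<bar> > \<epsilon>} x)
     * integral {y. \<epsilon> < \<bar>x - y\<bar>} (\<lambda>y. \<Phi> (x, y) / (x - y))"

end

theory Submission
  imports Defs
begin

(* Symmetrizing the kernel about its singularity gives
     \<integral>_{|x-y|>\<epsilon>} \<Phi>(x,y)/(x-y) dy = \<integral>_{|t|>\<epsilon>} (\<Phi>(x,x-t) - \<Phi>(x,x+t))/(2t) dt.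
   Since \<Phi> is Lipschitz in y (its derivative is continuous with compact support), the new
   integrand is bounded, and it vanishes for |t| > 2R when \<Phi> is supported in the ball of
   radius R.  Hence the truncated integrals converge, with error O(\<epsilon>), to a bounded compactly
   supported function H(x) = H_y\<Phi>(x,x); for \<epsilon> < |x| the factor in front of the truncated
   integral in Kir_\<epsilon>\<Phi>(x) is just x.  Off x = 0, h^\<epsilon>(x) Kir_\<epsilon>\<Phi>(x) is exactly the truncated
   integral, so the identity for T_\<epsilon> is Fubini applied to <<S_\<epsilon>, \<phi>\<Phi>>>.  Finally
   \<phi>(x) x H(x) / x = \<phi>(x) H(x) is integrable, so the principal value is an ordinary integral,
   namely <<S, \<phi>\<Phi>>>. *)

lemma bounded_if_continuous_vanishing_outside_compact:
  fixes f :: "'a::topological_space \<Rightarrow> real"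
  assumes "continuous_on UNIV f" "compact K" "\<And>x. x \<notin> K \<Longrightarrow> f x = 0"
  shows "\<exists>B. \<forall>x. \<bar>f x\<bar> \<le> B"
proof -
  have "compact (f ` K)"
    by (rule compact_continuous_image[OF continuous_on_subset[OF assms(1) subset_UNIV] assms(2)])
  from compact_imp_bounded[OF this] obtain B where "\<forall>y\<in>f ` K. norm y \<le> B"
    unfolding bounded_iff by blast
  then have "\<bar>f x\<bar> \<le> max B 0" for x
    using assms(3)[of x] by (cases "x \<in> K") auto
  then show ?thesis by blast
qed

lemma test_fun_continuous: "test_fun f \<Longrightarrow> continuous_on UNIV f"
  using Ck.simps(1) unfolding test_fun_def smooth_def by blast

lemma test_fun_borel_measurable: "test_fun f \<Longrightarrow> f \<in> borel_measurable borel"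
  by (rule borel_measurable_continuous_onI[OF test_fun_continuous])

lemma in_closure_support: "f p \<noteq> 0 \<Longrightarrow> p \<in> closure {p. f p \<noteq> 0}"
  by (rule closure_subset[THEN subsetD]) simp

lemma test_fun_support_bounded:
  assumes "test_fun f"
  obtains R where "0 \<le> R" "\<And>p. f p \<noteq> 0 \<Longrightarrow> norm p \<le> R"
proof -
  have "bounded (closure {p. f p \<noteq> 0})"
    using assms compact_imp_bounded unfolding test_fun_def compact_support_def by blast
  then obtain R where R: "\<forall>p\<in>closure {p. f p \<noteq> 0}. norm p \<le> R"
    unfolding bounded_iff by blast
  have "norm p \<le> max R 0" if "f p \<noteq> 0" for p
    using R in_closure_support[of f p, OF that] by fastforce
  then show ?thesis using that[of "max R 0"] by simp
qed

lemma test_fun_bounded: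
  assumes "test_fun f"
  obtains B where "\<And>p. \<bar>f p\<bar> \<le> B"
proof -
  have "compact (closure {p. f p \<noteq> 0})"
    using assms unfolding test_fun_def compact_support_def by blast
  moreover have "f p = 0" if "p \<notin> closure {p. f p \<noteq> 0}" for p
    using that in_closure_support[of f p] by blast
  ultimately show ?thesis
    using bounded_if_continuous_vanishing_outside_compact[OF test_fun_continuous[OF assms]] that
    by blast
qed

lemma has_derivative_zero_if_vanishing_near:
  assumes "(f has_derivative f') (at p)" "open S" "p \<in> S" "\<And>q. q \<in> S \<Longrightarrow> f q = 0"
  shows "f' = (\<lambda>h. 0)"
proof -
  have "((\<lambda>_. 0) has_derivative f') (at p)"
    using has_derivative_transform_within_open[OF assms(1,2,3)] assms(4) by simp
  then show ?thesis using has_derivative_const by (rule has_derivative_unique)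
qed

lemma has_real_derivative_second_component:
  fixes f :: "real \<times> real \<Rightarrow> real"
  assumes "(f has_derivative f') (at (x, y))"
  shows "((\<lambda>y. f (x, y)) has_real_derivative f' (0, 1)) (at y)"
proof -
  interpret bounded_linear f' using assms by (rule has_derivative_bounded_linear)
  have "((\<lambda>y. f (x, y)) has_derivative (\<lambda>h. f' (0, h))) (at y)"
    using has_derivative_compose[OF has_derivative_Pair[OF has_derivative_const has_derivative_ident] assms]
    by simp
  moreover have "(\<lambda>h. f' (0, h)) = (*) (f' (0, 1))"
  proof
    fix h :: real
    show "f' (0, h) = f' (0, 1) * h" using scaleR[of h "(0, 1)"] by simp
  qed
  ultimately show ?thesis by (simp add: has_field_derivative_def)
qed

lemma lipschitz_on_UNIV_if_deriv_bounded:
  fixes f :: "real \<Rightarrow> real"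
  assumes "\<And>y. (f has_real_derivative f' y) (at y)" "\<And>y. \<bar>f' y\<bar> \<le> B"
  shows "B-lipschitz_on UNIV f"
proof (rule bounded_derivative_imp_lipschitz)
  show "(f has_derivative (*) (f' y)) (at y within UNIV)" for y
    using assms(1) by (simp add: has_field_derivative_def)
  show "onorm ((*) (f' y)) \<le> B" for y
    using assms(2)[of y] by (intro onorm_le) (simp add: abs_mult mult_right_mono)
  show "0 \<le> B" using assms(2)[of 0] by linarith
qed simp

lemma test_fun_lipschitz_second_component:
  fixes \<Phi> :: "real \<times> real \<Rightarrow> real"
  assumes "test_fun \<Phi>"
  obtains L where "\<And>x. L-lipschitz_on UNIV (\<lambda>y. \<Phi> (x, y))"
proof -
  have "Ck (Suc 0) \<Phi>" using assms unfolding test_fun_def smooth_def by blast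
  then obtain f' where deriv: "\<forall>p. (\<Phi> has_derivative f' p) (at p)"
    and cont: "\<forall>v. continuous_on UNIV (\<lambda>p. f' p v)"
    unfolding Ck.simps by blast
  obtain R where R: "\<And>p. \<Phi> p \<noteq> 0 \<Longrightarrow> norm p \<le> R"
    using test_fun_support_bounded[OF assms] by blast
  have "f' p (0, 1) = 0" if "p \<notin> cball 0 R" for p
  proof -
    have "f' p = (\<lambda>h. 0)"
    proof (rule has_derivative_zero_if_vanishing_near[OF deriv[rule_format]])
      show "open (- cball 0 R)" "p \<in> - cball 0 R" using that by auto
      show "\<Phi> q = 0" if "q \<in> - cball 0 R" for q using that R[of q] by (auto simp: mem_cball_0)
    qed
    then show ?thesis by simp
  qed
  then obtain B where "\<And>p. \<bar>f' p (0, 1)\<bar> \<le> B"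
    using bounded_if_continuous_vanishing_outside_compact[OF cont[rule_format] compact_cball] by blast
  moreover have "((\<lambda>y. \<Phi> (x, y)) has_real_derivative f' (x, y) (0, 1)) (at y)" for x y
    by (rule has_real_derivative_second_component[OF deriv[rule_format]])
  ultimately have "B-lipschitz_on UNIV (\<lambda>y. \<Phi> (x, y))" for x
    by (intro lipschitz_on_UNIV_if_deriv_bounded)
  then show ?thesis by (rule that)
qed

lemma integrable_bounded_vanishing_outside_cball:
  fixes f :: "'a::euclidean_space \<Rightarrow> real"
  assumes "f \<in> borel_measurable lborel" "\<And>x. \<bar>f x\<bar> \<le> B" "\<And>x. f x \<noteq> 0 \<Longrightarrow> norm x \<le> R"
  shows "integrable lborel f"
  using assms emeasure_bounded_finite[OF bounded_cball, of 0 R]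
  by (intro integrableI_bounded_set[where A="cball 0 R" and B=B]) auto

lemma integral_eq_lborel_indicator:
  fixes f :: "'a::euclidean_space \<Rightarrow> real"
  assumes "integrable lborel (\<lambda>x. indicator S x * f x)"
  shows "integral S f = (\<integral>x. indicator S x * f x \<partial>lborel)"
proof -
  have "(\<lambda>x. indicator S x * f x) = (\<lambda>x. if x \<in> S then f x else 0)"
    by (auto simp: indicator_def)
  then show ?thesis
    using integral_lborel[OF assms] integral_restrict_UNIV[of S f] by simp
qed

lemma abs_integral_le_on_interval:
  fixes f :: "real \<Rightarrow> real"
  assumes "\<And>t. \<bar>f t\<bar> \<le> B * indicator {-a..a} t" "0 \<le> a"
  shows "\<bar>\<integral>t. f t \<partial>lborel\<bar> \<le> 2 * a * B"
proof (cases "integrable lborel f")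
  case True
  have "\<bar>\<integral>t. f t \<partial>lborel\<bar> \<le> (\<integral>t. \<bar>f t\<bar> \<partial>lborel)"
    using integral_norm_bound[of lborel f] by simp
  also have "\<dots> \<le> (\<integral>t. B * indicator {-a..a} t \<partial>lborel)"
    using True assms by (intro integral_mono) (auto intro!: integrable_mult_right)
  also have "\<dots> = 2 * a * B"
    using assms(2) by simp
  finally show ?thesis .
next
  case False
  moreover have "0 \<le> B" using assms(1)[of 0] assms(2) by simp
  ultimately show ?thesis using assms(2) by (simp add: not_integrable_integral_eq)
qed

lemma tendsto_integral_abs_gt:
  fixes f :: "real \<Rightarrow> real"
  assumes f: "integrable lborel f" and B: "\<And>t. \<bar>f t\<bar> \<le> B"
  shows "((\<lambda>\<epsilon>. integral {t. \<epsilon> < \<bar>t\<bar>} f) \<longlongrightarrow> (\<integral>t. f t \<partial>lborel)) (at_right 0)"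
proof -
  have error_bound: "\<bar>integral {t. \<epsilon> < \<bar>t\<bar>} f - (\<integral>t. f t \<partial>lborel)\<bar> \<le> 2 * \<epsilon> * B"
    if "0 < \<epsilon>" for \<epsilon>
  proof -
    have "{t::real. \<epsilon> < \<bar>t\<bar>} \<in> sets lborel" by measurable
    then have "integrable lborel (\<lambda>t. indicator {t. \<epsilon> < \<bar>t\<bar>} t * f t)"
      using integrable_real_mult_indicator[OF _ f] by (simp add: mult.commute)
    then have "integral {t. \<epsilon> < \<bar>t\<bar>} f - (\<integral>t. f t \<partial>lborel)
        = (\<integral>t. indicator {t. \<epsilon> < \<bar>t\<bar>} t * f t - f t \<partial>lborel)"
      using f by (simp add: integral_eq_lborel_indicator)
    also have "\<dots> = - (\<integral>t. indicator {-\<epsilon>..\<epsilon>} t * f t \<partial>lborel)"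
      by (subst integral_minus[symmetric], rule Bochner_Integration.integral_cong)
         (auto simp: indicator_def)
    finally show ?thesis
      using abs_integral_le_on_interval[of "\<lambda>t. indicator {-\<epsilon>..\<epsilon>} t * f t" B \<epsilon>] B that
      by (simp add: indicator_def)
  qed
  have "\<forall>\<^sub>F \<epsilon> in at_right 0.
      norm (integral {t. \<epsilon> < \<bar>t\<bar>} f - (\<integral>t. f t \<partial>lborel)) \<le> 2 * \<epsilon> * B"
    by (rule eventually_mono[OF eventually_at_right_less]) (simp add: error_bound)
  moreover have "((\<lambda>\<epsilon>::real. 2 * \<epsilon> * B) \<longlongrightarrow> 0) (at_right 0)"
    by (rule tendsto_eq_intros) (auto intro: tendsto_eq_intros)
  ultimately show ?thesis
    by (subst LIM_zero_iff[symmetric]) (rule Lim_null_comparison)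
qed

lemma lborel_integral_symmetrize:
  fixes f :: "real \<Rightarrow> real"
  assumes "integrable lborel f"
  shows "(\<integral>y. f y \<partial>lborel) = (\<integral>t. (f (x - t) + f (x + t)) / 2 \<partial>lborel)"
proof -
  have "(\<integral>y. f y \<partial>lborel) = (\<integral>t. f (x - t) \<partial>lborel)"
    using lborel_integral_real_affine[of "-1" f x] by simp
  moreover have "(\<integral>y. f y \<partial>lborel) = (\<integral>t. f (x + t) \<partial>lborel)"
    using lborel_integral_real_affine[of 1 f x] by simp
  moreover have "integrable lborel (\<lambda>t. f (x - t))" "integrable lborel (\<lambda>t. f (x + t))"
    using lborel_integrable_real_affine[OF assms, of "-1" x]
      lborel_integrable_real_affine[OF assms, of 1 x] by simp_all
  ultimately show ?thesis by simp
qed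

definition hilbert_trunc :: "(real \<times> real \<Rightarrow> real) \<Rightarrow> real \<Rightarrow> real \<Rightarrow> real" where
  "hilbert_trunc \<Theta> \<epsilon> x = integral {y. \<epsilon> < \<bar>x - y\<bar>} (\<lambda>y. \<Theta> (x, y) / (x - y))"

lemma hilbert_y_diag: "hilbert_y \<Theta> x x = Lim (at_right 0) (\<lambda>\<epsilon>. hilbert_trunc \<Theta> \<epsilon> x)"
  unfolding hilbert_y_def hilbert_trunc_def ..

lemma hilbert_trunc_mult_left:
  "hilbert_trunc (\<lambda>(x, y). \<phi> x * \<Theta> (x, y)) \<epsilon> x = \<phi> x * hilbert_trunc \<Theta> \<epsilon> x"
proof -
  have "(\<lambda>y. (\<lambda>(x, y). \<phi> x * \<Theta> (x, y)) (x, y) / (x - y)) = (\<lambda>y. \<phi> x * (\<Theta> (x, y) / (x - y)))"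
    by simp
  then show ?thesis unfolding hilbert_trunc_def by (simp only: integral_mult_right)
qed

lemma Kir_eps_outside: "\<epsilon> < \<bar>x\<bar> \<Longrightarrow> Kir_eps \<epsilon> \<Phi> x = x * hilbert_trunc \<Phi> \<epsilon> x"
  unfolding Kir_eps_def hilbert_trunc_def by (simp add: indicator_def)

lemma h_eps_mult_Kir_eps:
  assumes "0 < \<epsilon>" "x \<noteq> 0"
  shows "h_eps \<epsilon> x * Kir_eps \<epsilon> \<Phi> x = hilbert_trunc \<Phi> \<epsilon> x"
proof (cases "\<epsilon> < \<bar>x\<bar>")
  case True
  then have "\<not> (-\<epsilon> \<le> x \<and> x \<le> \<epsilon>)" by arith
  then show ?thesis
    using True assms(2) by (auto simp: h_eps_def Kir_eps_outside indicator_def)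
next
  case False
  then have "-\<epsilon> \<le> x \<and> x \<le> \<epsilon>" by arith
  moreover have "sgn x * sgn x = (1::real)" using assms(2) by (simp add: sgn_if)
  ultimately show ?thesis
    using False assms(1)
    by (simp add: h_eps_def Kir_eps_def hilbert_trunc_def indicator_def field_simps)
qed

locale y_lipschitz_bump =
  fixes \<Phi> :: "real \<times> real \<Rightarrow> real" and R M L :: real
  assumes kernel_measurable [measurable]: "\<Phi> \<in> borel_measurable borel"
    and kernel_support: "\<And>p. \<Phi> p \<noteq> 0 \<Longrightarrow> norm p \<le> R"
    and kernel_bound: "\<And>p. \<bar>\<Phi> p\<bar> \<le> M"
    and kernel_lipschitz: "\<And>x. L-lipschitz_on UNIV (\<lambda>y. \<Phi> (x, y))"
    and radius_nonneg: "0 \<le> R"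
begin

lemma kernel_bound_nonneg: "0 \<le> M"
  using kernel_bound[of 0] by linarith

lemma kernel_vanishes: "R < \<bar>x\<bar> \<or> R < \<bar>y\<bar> \<Longrightarrow> \<Phi> (x, y) = 0"
  using kernel_support[of "(x, y)"] norm_fst_le[of x y] norm_snd_le[of y x] by force

lemma kernel_measurable_pair [measurable]: "\<Phi> \<in> borel_measurable (lborel \<Otimes>\<^sub>M lborel)"
  by (simp add: lborel_prod)

definition symm_kernel :: "real \<Rightarrow> real \<Rightarrow> real" where
  "symm_kernel x t = (\<Phi> (x, x - t) - \<Phi> (x, x + t)) / (2 * t)"

definition hilbert_diag :: "real \<Rightarrow> real" where
  "hilbert_diag x = (\<integral>t. symm_kernel x t \<partial>lborel)"

lemma symm_kernel_bound: "\<bar>symm_kernel x t\<bar> \<le> L"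
proof (cases "t = 0")
  case True
  then show ?thesis using lipschitz_on_nonneg[OF kernel_lipschitz] by (simp add: symm_kernel_def)
next
  case False
  have "\<bar>\<Phi> (x, x - t) - \<Phi> (x, x + t)\<bar> \<le> L * \<bar>2 * t\<bar>"
    using lipschitz_onD[OF kernel_lipschitz, of "x - t" "x + t"] by (simp add: dist_real_def)
  then show ?thesis
    using False by (simp add: symm_kernel_def abs_divide divide_le_eq)
qed

lemma symm_kernel_vanishes:
  assumes "2 * R < \<bar>t\<bar> \<or> R < \<bar>x\<bar>"
  shows "symm_kernel x t = 0"
proof -
  have "R < \<bar>x\<bar> \<or> R < \<bar>x - t\<bar> \<and> R < \<bar>x + t\<bar>" using assms by arith
  then show ?thesis
    using kernel_vanishes[of x "x - t"] kernel_vanishes[of x "x + t"]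
    by (auto simp: symm_kernel_def)
qed

lemma symm_kernel_le_indicator: "\<bar>symm_kernel x t\<bar> \<le> L * indicator {-(2 * R)..2 * R} t"
  using symm_kernel_bound[of x t] symm_kernel_vanishes[of t x]
  by (cases "\<bar>t\<bar> \<le> 2 * R") (auto simp: indicator_def)

lemma symm_kernel_measurable [measurable]:
  "(\<lambda>(x, t). symm_kernel x t) \<in> borel_measurable (lborel \<Otimes>\<^sub>M lborel)"
  "symm_kernel x \<in> borel_measurable lborel"
  unfolding symm_kernel_def by measurable

lemma integrable_symm_kernel: "integrable lborel (symm_kernel x)"
  using symm_kernel_bound symm_kernel_vanishes[of _ x]
  by (intro integrable_bounded_vanishing_outside_cball[where B=L and R="2 * R"]) force+

lemma integrable_truncated_kernel:
  assumes "0 < \<epsilon>"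
  shows "integrable lborel (\<lambda>y. indicator {y. \<epsilon> < \<bar>x - y\<bar>} y * (\<Phi> (x, y) / (x - y)))"
proof (rule integrable_bounded_vanishing_outside_cball[where B="M / \<epsilon>" and R=R])
  show "(\<lambda>y. indicator {y. \<epsilon> < \<bar>x - y\<bar>} y * (\<Phi> (x, y) / (x - y))) \<in> borel_measurable lborel"
    by measurable
  show "\<bar>indicator {y. \<epsilon> < \<bar>x - y\<bar>} y * (\<Phi> (x, y) / (x - y))\<bar> \<le> M / \<epsilon>" for y
  proof (cases "\<epsilon> < \<bar>x - y\<bar>")
    case True
    then have "\<bar>\<Phi> (x, y)\<bar> / \<bar>x - y\<bar> \<le> M / \<epsilon>"
      using assms kernel_bound[of "(x, y)"] kernel_bound_nonneg
      by (intro frac_le) auto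
    then show ?thesis using True by (simp add: abs_divide)
  qed (use assms kernel_bound_nonneg in simp)
  show "norm y \<le> R" if "indicator {y. \<epsilon> < \<bar>x - y\<bar>} y * (\<Phi> (x, y) / (x - y)) \<noteq> 0" for y
    using that kernel_vanishes[of x y] by force
qed

lemma hilbert_trunc_eq_symm_kernel:
  assumes "0 < \<epsilon>"
  shows "hilbert_trunc \<Phi> \<epsilon> x = integral {t. \<epsilon> < \<bar>t\<bar>} (symm_kernel x)"
proof -
  let ?k = "\<lambda>y. indicator {y. \<epsilon> < \<bar>x - y\<bar>} y * (\<Phi> (x, y) / (x - y))"
  have "{t::real. \<epsilon> < \<bar>t\<bar>} \<in> sets lborel" by measurable
  from integrable_real_mult_indicator[OF this integrable_symm_kernel]
  have integrable: "integrable lborel (\<lambda>t. indicator {t. \<epsilon> < \<bar>t\<bar>} t * symm_kernel x t)"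
    by (simp add: mult.commute)
  have symm: "(?k (x - t) + ?k (x + t)) / 2 = indicator {t. \<epsilon> < \<bar>t\<bar>} t * symm_kernel x t" for t
    using assms by (cases "\<epsilon> < \<bar>t\<bar>") (auto simp: symm_kernel_def indicator_def field_simps)
  have "hilbert_trunc \<Phi> \<epsilon> x = (\<integral>y. ?k y \<partial>lborel)"
    unfolding hilbert_trunc_def by (rule integral_eq_lborel_indicator[OF integrable_truncated_kernel[OF assms]])
  also have "\<dots> = (\<integral>t. (?k (x - t) + ?k (x + t)) / 2 \<partial>lborel)"
    by (rule lborel_integral_symmetrize[OF integrable_truncated_kernel[OF assms]])
  also have "\<dots> = (\<integral>t. indicator {t. \<epsilon> < \<bar>t\<bar>} t * symm_kernel x t \<partial>lborel)"
    by (simp only: symm)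
  also have "\<dots> = integral {t. \<epsilon> < \<bar>t\<bar>} (symm_kernel x)"
    by (rule integral_eq_lborel_indicator[symmetric, OF integrable])
  finally show ?thesis .
qed

lemma tendsto_hilbert_trunc: "((\<lambda>\<epsilon>. hilbert_trunc \<Phi> \<epsilon> x) \<longlongrightarrow> hilbert_diag x) (at_right 0)"
proof (rule Lim_transform_eventually)
  show "((\<lambda>\<epsilon>. integral {t. \<epsilon> < \<bar>t\<bar>} (symm_kernel x)) \<longlongrightarrow> hilbert_diag x) (at_right 0)"
    unfolding hilbert_diag_def by (rule tendsto_integral_abs_gt[OF integrable_symm_kernel symm_kernel_bound])
  show "\<forall>\<^sub>F \<epsilon> in at_right 0. integral {t. \<epsilon> < \<bar>t\<bar>} (symm_kernel x) = hilbert_trunc \<Phi> \<epsilon> x"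
    by (rule eventually_mono[OF eventually_at_right_less]) (simp add: hilbert_trunc_eq_symm_kernel)
qed

lemma hilbert_y_eq_hilbert_diag: "hilbert_y \<Phi> x x = hilbert_diag x"
  unfolding hilbert_y_diag by (rule tendsto_Lim[OF trivial_limit_at_right_real tendsto_hilbert_trunc])

lemma hilbert_diag_bound: "\<bar>hilbert_diag x\<bar> \<le> 4 * R * L"
  using abs_integral_le_on_interval[of "symm_kernel x" L "2 * R"] symm_kernel_le_indicator radius_nonneg
  by (simp add: hilbert_diag_def)

lemma hilbert_diag_vanishes: "R < \<bar>x\<bar> \<Longrightarrow> hilbert_diag x = 0"
  by (simp add: hilbert_diag_def symm_kernel_vanishes)

lemma hilbert_diag_measurable [measurable]: "hilbert_diag \<in> borel_measurable lborel"
  unfolding hilbert_diag_def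
  by (rule lborel.borel_measurable_lebesgue_integral) (rule symm_kernel_measurable(1))

lemma tendsto_Kir_eps: "((\<lambda>\<epsilon>. Kir_eps \<epsilon> \<Phi> x) \<longlongrightarrow> x * hilbert_y \<Phi> x x) (at_right 0)"
proof (cases "x = 0")
  case True
  then show ?thesis by (simp add: Kir_eps_def)
next
  case False
  show ?thesis
  proof (rule Lim_transform_eventually)
    show "((\<lambda>\<epsilon>. x * hilbert_trunc \<Phi> \<epsilon> x) \<longlongrightarrow> x * hilbert_y \<Phi> x x) (at_right 0)"
      unfolding hilbert_y_eq_hilbert_diag by (intro tendsto_mult_left tendsto_hilbert_trunc)
    have "\<forall>\<^sub>F \<epsilon> in at_right 0. \<epsilon> < \<bar>x\<bar>"
      by (rule eventually_at_rightI[of 0 "\<bar>x\<bar>"]) (use False in auto)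
    then show "\<forall>\<^sub>F \<epsilon> in at_right 0. x * hilbert_trunc \<Phi> \<epsilon> x = Kir_eps \<epsilon> \<Phi> x"
      by (rule eventually_mono) (simp add: Kir_eps_outside)
  qed
qed

context
  fixes \<phi> :: "real \<Rightarrow> real" and C :: real
  assumes weight_measurable [measurable]: "\<phi> \<in> borel_measurable borel"
    and weight_bound: "\<And>x. \<bar>\<phi> x\<bar> \<le> C"
begin

lemma weight_bound_nonneg: "0 \<le> C"
  using weight_bound[of 0] by linarith

lemma integrable_weighted_truncated_kernel:
  assumes "0 < \<epsilon>"
  shows "integrable lborel
    (\<lambda>p. indicator {p. \<epsilon> < \<bar>fst p - snd p\<bar>} p * (\<phi> (fst p) * \<Phi> p / (fst p - snd p)))"
    (is "integrable lborel ?G")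
proof (rule integrable_bounded_vanishing_outside_cball)
  have "?G \<in> borel_measurable (lborel \<Otimes>\<^sub>M lborel)" by measurable
  then show "?G \<in> borel_measurable lborel" by (simp only: lborel_prod)
  show "\<bar>?G p\<bar> \<le> C * M / \<epsilon>" for p
  proof (cases "\<epsilon> < \<bar>fst p - snd p\<bar>")
    case True
    then have "\<bar>\<phi> (fst p)\<bar> * \<bar>\<Phi> p\<bar> / \<bar>fst p - snd p\<bar> \<le> C * M / \<epsilon>"
      using assms weight_bound kernel_bound kernel_bound_nonneg weight_bound_nonneg
      by (intro frac_le mult_mono) auto
    then show ?thesis using True by (simp add: abs_mult abs_divide)
  qed (use assms kernel_bound_nonneg weight_bound_nonneg in simp)
  show "norm p \<le> R" if "?G p \<noteq> 0" for p
  proof -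
    have "\<Phi> p \<noteq> 0" using that by auto
    then show ?thesis by (rule kernel_support)
  qed
qed

lemma S_eps_eq_integral_hilbert_trunc:
  assumes "0 < \<epsilon>"
  shows "integrable lborel (\<lambda>x. \<phi> x * hilbert_trunc \<Phi> \<epsilon> x)"
    and "S_eps \<epsilon> (\<lambda>(x, y). \<phi> x * \<Phi> (x, y)) = (\<integral>x. \<phi> x * hilbert_trunc \<Phi> \<epsilon> x \<partial>lborel)"
proof -
  define D where "D = {p :: real \<times> real. \<epsilon> < \<bar>fst p - snd p\<bar>}"
  define G where "G p = indicator D p * (\<phi> (fst p) * \<Phi> p / (fst p - snd p))" for p
  have G_lborel: "integrable lborel G"
    unfolding G_def D_def by (rule integrable_weighted_truncated_kernel[OF assms])
  then have G: "integrable (lborel \<Otimes>\<^sub>M lborel) G" by (simp only: lborel_prod)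
  have inner: "(\<integral>y. G (x, y) \<partial>lborel) = \<phi> x * hilbert_trunc \<Phi> \<epsilon> x" for x
  proof -
    have "G (x, y) = \<phi> x * (indicator {y. \<epsilon> < \<bar>x - y\<bar>} y * (\<Phi> (x, y) / (x - y)))" for y
      by (simp add: G_def D_def indicator_def)
    then show ?thesis
      unfolding hilbert_trunc_def integral_eq_lborel_indicator[OF integrable_truncated_kernel[OF assms]]
      by (simp only: integral_mult_right_zero)
  qed
  show "integrable lborel (\<lambda>x. \<phi> x * hilbert_trunc \<Phi> \<epsilon> x)"
    using lborel_pair.integrable_fst'[OF G] unfolding inner .
  have "S_eps \<epsilon> (\<lambda>(x, y). \<phi> x * \<Phi> (x, y)) = integral D (\<lambda>p. \<phi> (fst p) * \<Phi> p / (fst p - snd p))"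
    unfolding S_eps_def D_def by (simp add: case_prod_beta)
  also have "\<dots> = (\<integral>p. G p \<partial>lborel)"
    unfolding G_def by (rule integral_eq_lborel_indicator[OF G_lborel[unfolded G_def]])
  also have "\<dots> = (\<integral>x. \<phi> x * hilbert_trunc \<Phi> \<epsilon> x \<partial>lborel)"
    using lborel_pair.integral_fst'[OF G] unfolding inner lborel_prod ..
  finally show "S_eps \<epsilon> (\<lambda>(x, y). \<phi> x * \<Phi> (x, y)) = (\<integral>x. \<phi> x * hilbert_trunc \<Phi> \<epsilon> x \<partial>lborel)" .
qed

lemma T_eps_Kir_eps_eq_S_eps:
  assumes "0 < \<epsilon>"
  shows "T_eps \<epsilon> (\<lambda>x. \<phi> x * Kir_eps \<epsilon> \<Phi> x) = S_eps \<epsilon> (\<lambda>(x, y). \<phi> x * \<Phi> (x, y))"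
proof -
  have "T_eps \<epsilon> (\<lambda>x. \<phi> x * Kir_eps \<epsilon> \<Phi> x) = integral UNIV (\<lambda>x. \<phi> x * hilbert_trunc \<Phi> \<epsilon> x)"
    unfolding T_eps_def
  proof (rule integral_spike[of "{0}"])
    show "\<phi> x * hilbert_trunc \<Phi> \<epsilon> x = h_eps \<epsilon> x * (\<phi> x * Kir_eps \<epsilon> \<Phi> x)"
      if "x \<in> UNIV - {0}" for x
      using h_eps_mult_Kir_eps[OF assms, of x \<Phi>] that by simp
  qed simp
  also have "\<dots> = S_eps \<epsilon> (\<lambda>(x, y). \<phi> x * \<Phi> (x, y))"
    using S_eps_eq_integral_hilbert_trunc[OF assms] by (simp add: integral_lborel)
  finally show ?thesis .
qed

lemma pv_recip_eq_S_pair: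
  "pv_recip (\<lambda>x. \<phi> x * (x * hilbert_y \<Phi> x x)) = S_pair (\<lambda>(x, y). \<phi> x * \<Phi> (x, y))"
proof -
  define g where "g x = \<phi> x * hilbert_diag x" for x
  have g_bound: "\<bar>g x\<bar> \<le> C * (4 * R * L)" for x
    unfolding g_def abs_mult
    using weight_bound hilbert_diag_bound weight_bound_nonneg by (intro mult_mono) auto
  have g: "integrable lborel g"
  proof (rule integrable_bounded_vanishing_outside_cball[OF _ g_bound])
    show "g \<in> borel_measurable lborel" unfolding g_def by measurable
    show "norm x \<le> R" if "g x \<noteq> 0" for x
      using that hilbert_diag_vanishes[of x] by (force simp: g_def)
  qed
  have "integral {x. \<epsilon> < \<bar>x\<bar>} g = integral {x. \<epsilon> < \<bar>x\<bar>} (\<lambda>x. \<phi> x * (x * hilbert_y \<Phi> x x) / x)"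
    if "0 < \<epsilon>" for \<epsilon>
    using that by (intro Henstock_Kurzweil_Integration.integral_cong)
      (auto simp: g_def hilbert_y_eq_hilbert_diag)
  then have "\<forall>\<^sub>F \<epsilon> in at_right 0. integral {x. \<epsilon> < \<bar>x\<bar>} g
      = integral {x. \<epsilon> < \<bar>x\<bar>} (\<lambda>x. \<phi> x * (x * hilbert_y \<Phi> x x) / x)"
    by (rule eventually_mono[OF eventually_at_right_less])
  from Lim_transform_eventually[OF tendsto_integral_abs_gt[OF g g_bound] this]
  have "pv_recip (\<lambda>x. \<phi> x * (x * hilbert_y \<Phi> x x)) = (\<integral>x. g x \<partial>lborel)"
    unfolding pv_recip_def by (rule tendsto_Lim[OF trivial_limit_at_right_real])
  moreover have "hilbert_y (\<lambda>(x, y). \<phi> x * \<Phi> (x, y)) x x = g x" for x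
    unfolding hilbert_y_diag hilbert_trunc_mult_left g_def
    by (intro tendsto_Lim[OF trivial_limit_at_right_real] tendsto_mult_left tendsto_hilbert_trunc)
  ultimately show ?thesis
    unfolding S_pair_def using integral_lborel[OF g] by simp
qed

end

end

theorem proposition9p2:
  fixes \<Phi> :: "real \<times> real \<Rightarrow> real"
  assumes "test_fun \<Phi>"
  shows "(\<forall>\<epsilon>>0. \<forall>\<phi>::real \<Rightarrow> real. test_fun \<phi> \<longrightarrow>
            T_eps \<epsilon> (\<lambda>x. \<phi> x * Kir_eps \<epsilon> \<Phi> x) = S_eps \<epsilon> (\<lambda>(x, y). \<phi> x * \<Phi> (x, y)))
       \<and> (\<forall>x. ((\<lambda>\<epsilon>. Kir_eps \<epsilon> \<Phi> x) \<longlongrightarrow> x * hilbert_y \<Phi> x x) (at_right 0))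
       \<and> (\<forall>\<phi>::real \<Rightarrow> real. test_fun \<phi> \<longrightarrow>
            pv_recip (\<lambda>x. \<phi> x * (x * hilbert_y \<Phi> x x)) = S_pair (\<lambda>(x, y). \<phi> x * \<Phi> (x, y)))"
proof -
  obtain R where "0 \<le> R" "\<And>p. \<Phi> p \<noteq> 0 \<Longrightarrow> norm p \<le> R"
    using test_fun_support_bounded[OF assms] by blast
  moreover obtain M where "\<And>p. \<bar>\<Phi> p\<bar> \<le> M"
    using test_fun_bounded[OF assms] by blast
  moreover obtain L where "\<And>x. L-lipschitz_on UNIV (\<lambda>y. \<Phi> (x, y))"
    using test_fun_lipschitz_second_component[OF assms] by blast
  ultimately interpret y_lipschitz_bump \<Phi> R M L
    using test_fun_borel_measurable[OF assms] by unfold_locales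
  show ?thesis
  proof (intro conjI allI impI)
    fix \<epsilon> :: real and \<phi> :: "real \<Rightarrow> real"
    assume "0 < \<epsilon>" and \<phi>: "test_fun \<phi>"
    obtain C where "\<And>x. \<bar>\<phi> x\<bar> \<le> C" using test_fun_bounded[OF \<phi>] by blast
    from T_eps_Kir_eps_eq_S_eps[OF test_fun_borel_measurable[OF \<phi>] this \<open>0 < \<epsilon>\<close>]
    show "T_eps \<epsilon> (\<lambda>x. \<phi> x * Kir_eps \<epsilon> \<Phi> x) = S_eps \<epsilon> (\<lambda>(x, y). \<phi> x * \<Phi> (x, y))" .
  next
    fix \<phi> :: "real \<Rightarrow> real"
    assume \<phi>: "test_fun \<phi>"
    obtain C where "\<And>x. \<bar>\<phi> x\<bar> \<le> C" using test_fun_bounded[OF \<phi>] by blast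
    from pv_recip_eq_S_pair[OF test_fun_borel_measurable[OF \<phi>] this]
    show "pv_recip (\<lambda>x. \<phi> x * (x * hilbert_y \<Phi> x x)) = S_pair (\<lambda>(x, y). \<phi> x * \<Phi> (x, y))" .
  qed (rule tendsto_Kir_eps)
qed

end
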